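(* Let $(X,d)$ be a path-connected metric space, $n\geq 1$, and $\gamma:[0,1]\to X$ a path. The change-of-basepoint group isomorphism $\Gamma:\pi_n(X,\gamma(1))\to\pi_n(X,\gamma(0))$, $\Gamma([\beta])=[\gamma\ast\beta]$, is an isometry with respect to the pseudometrics $\rho$ on these groups.
   Context: Identify $n$-loops with based maps $(S^n,d_0)\to X$, $d_0=(1,0,\dots,0)$, with uniform metric $\mu(\alpha,\beta)=\sup_{t\in S^n}d(\alpha(t),\beta(t))$; for $a,b\in\pi_n(X,x)$, $\rho(a,b)=\inf\{\mu(\alpha,\beta)\mid\alpha\in a,\beta\in b\}$. Path-conjugation: fix once and for all a retraction $r:S^n\times[0,1]\to S^n\times\{0\}\cup\{d_0\}\times[0,1]$. For a path $\gamma$ and a based map $\alpha:(S^n,d_0)\to(X,\gamma(1))$, let $h:S^n\times\{0\}\cup\{d_0\}\times[0,1]\to X$ be $\alpha$ on $S^n\times\{0\}$ and $h(d_0,s)=\gamma(1-s)$; then $\gamma\ast\alpha:(S^n,d_0)\to(X,\gamma(0))$ is $t\mapsto h(r(t,1))$. *)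

theory Defs
  imports "HOL-Analysis.Analysis"
begin

text \<open>The n-sphere is modelled as the unit sphere of a Euclidean space 'a with
  DIM('a) = n+1; the base point d0 is a fixed standard basis vector.\<close>

definition nloops :: "'a::euclidean_space \<Rightarrow> 'b::metric_space set \<Rightarrow> 'b \<Rightarrow> ('a \<Rightarrow> 'b) set" where
  "nloops d0 X x = {\<alpha>. continuous_on (sphere 0 1) \<alpha> \<and> \<alpha> ` sphere 0 1 \<subseteq> X \<and> \<alpha> d0 = x}"

definition nclass :: "'a::euclidean_space \<Rightarrow> 'b::metric_space set \<Rightarrow> 'b \<Rightarrow> ('a \<Rightarrow> 'b) \<Rightarrow> ('a \<Rightarrow> 'b) set" where
  "nclass d0 X x \<alpha> = {\<beta> \<in> nloops d0 X x.
      homotopic_with_canon (\<lambda>f. f d0 = x) (sphere 0 1) X \<alpha> \<beta>}"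

definition pi_n :: "'a::euclidean_space \<Rightarrow> 'b::metric_space set \<Rightarrow> 'b \<Rightarrow> ('a \<Rightarrow> 'b) set set" where
  "pi_n d0 X x = nclass d0 X x ` nloops d0 X x"

definition umetric :: "('a::euclidean_space \<Rightarrow> 'b::metric_space) \<Rightarrow> ('a \<Rightarrow> 'b) \<Rightarrow> real" where
  "umetric \<alpha> \<beta> = (SUP t\<in>sphere 0 1. dist (\<alpha> t) (\<beta> t))"

definition rho :: "('a::euclidean_space \<Rightarrow> 'b::metric_space) set \<Rightarrow> ('a \<Rightarrow> 'b) set \<Rightarrow> real" where
  "rho a b = Inf {umetric \<alpha> \<beta> | \<alpha> \<beta>. \<alpha> \<in> a \<and> \<beta> \<in> b}"

definition conj_retraction :: "'a::euclidean_space \<Rightarrow> ('a \<times> real \<Rightarrow> 'a \<times> real) \<Rightarrow> bool" where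
  "conj_retraction d0 r \<longleftrightarrow>
     retraction (sphere 0 1 \<times> {0..1}) (sphere 0 1 \<times> {0} \<union> {d0} \<times> {0..1}) r"

definition path_conj :: "('a::euclidean_space \<times> real \<Rightarrow> 'a \<times> real) \<Rightarrow> (real \<Rightarrow> 'b) \<Rightarrow> ('a \<Rightarrow> 'b) \<Rightarrow> 'a \<Rightarrow> 'b" where
  "path_conj r \<gamma> \<alpha> t = (let (u, s) = r (t, 1) in if s = 0 then \<alpha> u else \<gamma> (1 - s))"

definition change_basepoint :: "'a::euclidean_space \<Rightarrow> 'b::metric_space set \<Rightarrow> ('a \<times> real \<Rightarrow> 'a \<times> real)
    \<Rightarrow> (real \<Rightarrow> 'b) \<Rightarrow> ('a \<Rightarrow> 'b) set \<Rightarrow> ('a \<Rightarrow> 'b) set" where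
  "change_basepoint d0 X r \<gamma> a = nclass d0 X (\<gamma> 0) (path_conj r \<gamma> (SOME \<beta>. \<beta> \<in> a))"

end

theory Submission
  imports Defs
begin

text \<open>Conjugation by \<gamma> is pointwise nonexpanding for the uniform metric: at a point t,
  \<gamma> * \<alpha> either evaluates \<alpha> at a point of the sphere, or evaluates \<gamma>, and the latter
  is the same for every loop. It respects based homotopy, and conjugation by the reversed
  path is a homotopy inverse to it. So \<Gamma> and its inverse are both induced by maps of
  representatives that do not increase uniform distances, and hence \<rho> is preserved.\<close>

abbreviation based_homotopic ::
    "'a::euclidean_space \<Rightarrow> 'b::metric_space set \<Rightarrow> 'b \<Rightarrow> ('a \<Rightarrow> 'b) \<Rightarrow> ('a \<Rightarrow> 'b) \<Rightarrow> bool" where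
  "based_homotopic d0 X x \<equiv> homotopic_with_canon (\<lambda>f. f d0 = x) (sphere 0 1) X"

lemma homotopic_with_canon_based_iff:
  assumes "d0 \<in> S"
  shows "homotopic_with_canon (\<lambda>f. f d0 = c) S T p q \<longleftrightarrow>
    (\<exists>h. continuous_on ({0..1::real} \<times> S) h \<and> h ` ({0..1} \<times> S) \<subseteq> T \<and>
       (\<forall>x\<in>S. h (0, x) = p x) \<and> (\<forall>x\<in>S. h (1, x) = q x) \<and> (\<forall>t\<in>{0..1}. h (t, d0) = c))"
  using assms
  by (subst homotopic_with)
     (auto simp: continuous_map_subtopology_eu prod_topology_subtopology subtopology_subtopology
        Times_Int_Times)

subsection \<open>Gluing a loop and a path\<close>

definition glue_loop_path :: "(real \<Rightarrow> 'b) \<Rightarrow> ('a \<Rightarrow> 'b) \<Rightarrow> 'a \<times> real \<Rightarrow> 'b" where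
  "glue_loop_path \<gamma> \<alpha> = (\<lambda>(u, s). if s = 0 then \<alpha> u else \<gamma> (1 - s))"

lemma path_conj_eq_glue_loop_path: "path_conj r \<gamma> \<alpha> t = glue_loop_path \<gamma> \<alpha> (r (t, 1))"
  by (cases "r (t, 1)") (simp add: path_conj_def glue_loop_path_def)

lemma glue_loop_path_cong:
  assumes "p \<in> S \<times> {0} \<union> {d0} \<times> {0..1}" "d0 \<in> S" "\<And>u. u \<in> S \<Longrightarrow> \<alpha> u = \<beta> u"
  shows "glue_loop_path \<gamma> \<alpha> p = glue_loop_path \<gamma> \<beta> p"
  using assms by (auto simp: glue_loop_path_def)

lemma glue_loop_path_in:
  assumes "p \<in> S \<times> {0} \<union> {d0} \<times> {0..1}" "d0 \<in> S" "\<alpha> ` S \<subseteq> X" "path_image \<gamma> \<subseteq> X"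
  shows "glue_loop_path \<gamma> \<alpha> p \<in> X"
proof -
  have "\<gamma> (1 - s) \<in> X" if "s \<in> {0..1}" for s
    using that assms(4) by (auto simp: path_image_def)
  then show ?thesis
    using assms(1-3) by (auto simp: glue_loop_path_def)
qed

lemma continuous_on_glue_loop_path_family:
  fixes K :: "'c::topological_space \<Rightarrow> 'a::t1_space \<Rightarrow> 'b::topological_space"
  assumes "closed L" "closed S" and K: "continuous_on (L \<times> S) (\<lambda>(l, u). K l u)"
    and K_base: "\<And>l. l \<in> L \<Longrightarrow> K l d0 = \<gamma> 1" and \<gamma>: "continuous_on {0..1} \<gamma>"
  shows "continuous_on (L \<times> (S \<times> {0} \<union> {d0} \<times> {0..1})) (\<lambda>(l, p). glue_loop_path \<gamma> (K l) p)"
proof -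
  have split: "L \<times> (S \<times> {0} \<union> {d0} \<times> {0..1}) = L \<times> (S \<times> {0}) \<union> L \<times> ({d0} \<times> {0..1})"
    by auto
  have "continuous_on (L \<times> (S \<times> {0})) (\<lambda>q. (\<lambda>(l, u). K l u) (fst q, fst (snd q)))"
    by (rule continuous_on_compose2[OF K]) (auto intro!: continuous_intros)
  then have on_loop: "continuous_on (L \<times> (S \<times> {0})) (\<lambda>(l, p). glue_loop_path \<gamma> (K l) p)"
    by (rule continuous_on_eq) (auto simp: glue_loop_path_def)
  have "continuous_on (L \<times> ({d0} \<times> {0..1})) (\<lambda>q. \<gamma> (1 - snd (snd q)))"
    by (rule continuous_on_compose2[OF \<gamma>]) (auto intro!: continuous_intros)
  then have on_path: "continuous_on (L \<times> ({d0} \<times> {0..1})) (\<lambda>(l, p). glue_loop_path \<gamma> (K l) p)"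
    by (rule continuous_on_eq) (auto simp: glue_loop_path_def K_base)
  show ?thesis
    unfolding split using assms(1,2)
    by (intro continuous_on_closed_Un on_loop on_path closed_Times) auto
qed

lemma continuous_on_glue_loop_path:
  fixes \<alpha> :: "'a::t1_space \<Rightarrow> 'b::topological_space"
  assumes "closed S" "continuous_on S \<alpha>" "\<alpha> d0 = \<gamma> 1" "continuous_on {0..1} \<gamma>"
  shows "continuous_on (S \<times> {0} \<union> {d0} \<times> {0..1}) (glue_loop_path \<gamma> \<alpha>)"
proof -
  have "continuous_on ({0::real} \<times> S) (\<lambda>(l, u). \<alpha> u)"
    unfolding case_prod_beta' by (intro continuous_on_compose2[OF assms(2)] continuous_intros) auto
  then have "continuous_on ({0::real} \<times> (S \<times> {0} \<union> {d0} \<times> {0..1}))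
      (\<lambda>(l, p). glue_loop_path \<gamma> \<alpha> p)"
    using continuous_on_glue_loop_path_family[of "{0::real}" S "\<lambda>_. \<alpha>"] assms by auto
  from continuous_on_o_Pair[OF this, of 0] show ?thesis
    by (simp add: o_def)
qed

subsection \<open>Path conjugation and based homotopy\<close>

lemma conj_retractionD:
  assumes "conj_retraction d0 r"
  shows "continuous_on (sphere 0 1 \<times> {0..1}) r"
    and "\<And>t s. t \<in> sphere 0 1 \<Longrightarrow> s \<in> {0..1} \<Longrightarrow> r (t, s) \<in> sphere 0 1 \<times> {0} \<union> {d0} \<times> {0..1}"
    and "\<And>p. p \<in> sphere 0 1 \<times> {0} \<union> {d0} \<times> {0..1} \<Longrightarrow> r p = p"
  using assms unfolding conj_retraction_def retraction_def by (auto simp: Pi_iff)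

lemma path_conj_homotopic:
  fixes \<gamma> :: "real \<Rightarrow> 'b::metric_space" and d0 :: "'a::euclidean_space"
  assumes r: "conj_retraction d0 r" and d0: "d0 \<in> sphere 0 1"
    and \<gamma>: "path \<gamma>" "path_image \<gamma> \<subseteq> X"
    and hom: "based_homotopic d0 X (\<gamma> 1) \<alpha> \<beta>"
  shows "based_homotopic d0 X (\<gamma> 0) (path_conj r \<gamma> \<alpha>) (path_conj r \<gamma> \<beta>)"
proof -
  let ?S = "sphere (0::'a) 1"
  let ?T = "?S \<times> {0::real} \<union> {d0} \<times> {0..1}"
  obtain H where H: "continuous_on ({0..1::real} \<times> ?S) H" and HX: "H ` ({0..1} \<times> ?S) \<subseteq> X"
    and H0: "\<forall>x\<in>?S. H (0, x) = \<alpha> x" and H1: "\<forall>x\<in>?S. H (1, x) = \<beta> x"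
    and H_base: "\<forall>l\<in>{0..1}. H (l, d0) = \<gamma> 1"
    using hom unfolding homotopic_with_canon_based_iff[OF d0] by blast
  have r_at_1: "r (t, 1) \<in> ?T" if "t \<in> ?S" for t
    using conj_retractionD(2)[OF r that] by simp
  define G where "G = (\<lambda>(l, p). glue_loop_path \<gamma> (\<lambda>u. H (l, u)) p) \<circ> (\<lambda>(l, t). (l, r (t, 1)))"
  have glue: "continuous_on ({0..1} \<times> ?T) (\<lambda>(l, p). glue_loop_path \<gamma> (\<lambda>u. H (l, u)) p)"
    using H H_base \<gamma>(1) unfolding path_def
    by (intro continuous_on_glue_loop_path_family) (auto simp: case_prod_beta')
  have "continuous_on ({0..1::real} \<times> ?S) (\<lambda>(l, t). (l, r (t, 1)))"
    unfolding case_prod_beta'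
    by (intro continuous_intros continuous_on_compose2[OF conj_retractionD(1)[OF r]]) auto
  moreover have "(\<lambda>(l, t). (l, r (t, 1))) ` ({0..1::real} \<times> ?S) \<subseteq> {0..1} \<times> ?T"
  proof
    fix q assume "q \<in> (\<lambda>(l, t). (l, r (t, 1))) ` ({0..1::real} \<times> ?S)"
    then obtain l t where "q = (l, r (t, 1))" "l \<in> {0..1}" "t \<in> ?S" by auto
    then show "q \<in> {0..1} \<times> ?T"
      using r_at_1 by simp
  qed
  ultimately have "continuous_on ({0..1} \<times> ?S) G"
    unfolding G_def by (intro continuous_on_compose continuous_on_subset[OF glue])
  moreover have "G (l, t) \<in> X" if "l \<in> {0..1}" "t \<in> ?S" for l t
  proof -
    have "(\<lambda>u. H (l, u)) ` ?S \<subseteq> X"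
      using HX that(1) by auto
    then show ?thesis
      using glue_loop_path_in[OF r_at_1[OF that(2)] d0 _ \<gamma>(2)] by (simp add: G_def)
  qed
  moreover have "G (0, t) = path_conj r \<gamma> \<alpha> t" "G (1, t) = path_conj r \<gamma> \<beta> t" if "t \<in> ?S" for t
    using H0 H1 unfolding G_def path_conj_eq_glue_loop_path
    by (auto intro!: glue_loop_path_cong[OF r_at_1[OF that] d0])
  moreover have "G (l, d0) = \<gamma> 0" for l
    using d0 conj_retractionD(3)[OF r, of "(d0, 1)"] by (simp add: G_def glue_loop_path_def)
  ultimately show ?thesis
    unfolding homotopic_with_canon_based_iff[OF d0] by (intro exI[of _ G]) auto
qed

lemma based_homotopic_path_conj_of_track:
  fixes F :: "'a::euclidean_space \<times> real \<Rightarrow> 'b::metric_space"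
  assumes r: "conj_retraction d0 r" and d0: "d0 \<in> sphere 0 1"
    and F: "continuous_on (sphere 0 1 \<times> {0..1}) F" "F ` (sphere 0 1 \<times> {0..1}) \<subseteq> X"
    and F_track: "\<And>\<sigma>. \<sigma> \<in> {0..1} \<Longrightarrow> F (d0, \<sigma>) = \<gamma> (1 - \<sigma>)"
  shows "based_homotopic d0 X (\<gamma> 0) (\<lambda>t. F (t, 1)) (path_conj r \<gamma> (\<lambda>u. F (u, 0)))"
proof -
  let ?S = "sphere (0::'a) 1"
  note r_cont = conj_retractionD(1)[OF r] and r_into = conj_retractionD(2)[OF r]
    and r_fix = conj_retractionD(3)[OF r]
  \<comment> \<open>At l = 0 the map m is t \<mapsto> (t, 1); at l = 1 it is r(-, 1), and F \<circ> r(-, 1) is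
    \<gamma> * F(-, 0). The base point stays at (d0, 1) throughout.\<close>
  define m where "m = (\<lambda>(l, t). (fst (r (t, l)), 1 - l + l * snd (r (t, 1))))"
  have "continuous_on ({0..1} \<times> ?S) m"
    unfolding m_def case_prod_beta'
    by (intro continuous_intros continuous_on_compose2[OF r_cont]) auto
  moreover have m_into: "m (l, t) \<in> ?S \<times> {0..1}" if "l \<in> {0..1}" "t \<in> ?S" for l t
  proof -
    have "fst (r (t, l)) \<in> ?S"
      using r_into[OF that(2,1)] d0 by auto
    moreover have "snd (r (t, 1)) \<in> {0..1}"
      using r_into[OF that(2), of 1] by auto
    then have "1 - l + l * snd (r (t, 1)) \<in> {0..1}"
      using that(1) mult_left_le[of "snd (r (t, 1))" l] by auto
    ultimately show ?thesis
      by (simp add: m_def)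
  qed
  moreover have "m ` ({0..1} \<times> ?S) \<subseteq> ?S \<times> {0..1}"
    using m_into by blast
  ultimately have "continuous_on ({0..1} \<times> ?S) (F \<circ> m)"
    by (intro continuous_on_compose continuous_on_subset[OF F(1)])
  moreover have "(F \<circ> m) (l, t) \<in> X" if "l \<in> {0..1}" "t \<in> ?S" for l t
    using F(2) m_into[OF that] by auto
  moreover have "(F \<circ> m) (0, t) = F (t, 1)" if "t \<in> ?S" for t
    using r_fix[of "(t, 0)"] that by (simp add: m_def)
  moreover have "(F \<circ> m) (1, t) = path_conj r \<gamma> (\<lambda>u. F (u, 0)) t" if "t \<in> ?S" for t
    using r_into[OF that, of 1] F_track d0
    by (cases "r (t, 1)") (auto simp: m_def path_conj_def)
  moreover have "(F \<circ> m) (l, d0) = \<gamma> 0" if "l \<in> {0..1}" for l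
    using r_fix[of "(d0, l)"] r_fix[of "(d0, 1)"] F_track[of 1] that by (simp add: m_def)
  ultimately show ?thesis
    unfolding homotopic_with_canon_based_iff[OF d0] by (intro exI[of _ "F \<circ> m"]) auto
qed

lemma based_homotopic_path_conj_reversepath:
  fixes \<gamma> :: "real \<Rightarrow> 'b::metric_space" and d0 :: "'a::euclidean_space"
  assumes r: "conj_retraction d0 r" and d0: "d0 \<in> sphere 0 1"
    and \<gamma>: "path \<gamma>" "path_image \<gamma> \<subseteq> X" and \<alpha>: "\<alpha> \<in> nloops d0 X (\<gamma> 1)"
  shows "based_homotopic d0 X (\<gamma> 1) \<alpha> (path_conj r (reversepath \<gamma>) (path_conj r \<gamma> \<alpha>))"
proof -
  let ?S = "sphere (0::'a) 1"
  let ?T = "?S \<times> {0::real} \<union> {d0} \<times> {0..1}"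
  note r_into = conj_retractionD(2)[OF r] and r_fix = conj_retractionD(3)[OF r]
  have \<alpha>_cont: "continuous_on ?S \<alpha>" and \<alpha>X: "\<alpha> ` ?S \<subseteq> X" and \<alpha>_base: "\<alpha> d0 = \<gamma> 1"
    using \<alpha> by (auto simp: nloops_def)
  \<comment> \<open>F runs the gluing backwards: F(-, 0) = \<gamma> * \<alpha> and F(-, 1) = \<alpha>.\<close>
  define F where "F = glue_loop_path \<gamma> \<alpha> \<circ> (\<lambda>p. r (fst p, 1 - snd p))"
  have r_into': "r (fst p, 1 - snd p) \<in> ?T" if "p \<in> ?S \<times> {0..1}" for p
    using r_into[of "fst p" "1 - snd p"] that by (auto simp del: mem_sphere)
  have glue_cont: "continuous_on ?T (glue_loop_path \<gamma> \<alpha>)"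
    using \<alpha>_cont \<alpha>_base \<gamma>(1) unfolding path_def by (intro continuous_on_glue_loop_path) auto
  have "continuous_on (?S \<times> {0..1}) (\<lambda>p. r (fst p, 1 - snd p))"
    by (intro continuous_intros continuous_on_compose2[OF conj_retractionD(1)[OF r]]) auto
  moreover have "(\<lambda>p. r (fst p, 1 - snd p)) ` (?S \<times> {0..1}) \<subseteq> ?T"
    by (rule image_subsetI) (rule r_into')
  ultimately have "continuous_on (?S \<times> {0..1}) F"
    unfolding F_def by (intro continuous_on_compose continuous_on_subset[OF glue_cont])
  moreover have "F ` (?S \<times> {0..1}) \<subseteq> X"
    by (rule image_subsetI) (simp add: F_def glue_loop_path_in[OF r_into' d0 \<alpha>X \<gamma>(2)])
  moreover have "F (d0, \<sigma>) = reversepath \<gamma> (1 - \<sigma>)" if "\<sigma> \<in> {0..1}" for \<sigma>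
    using r_fix[of "(d0, 1 - \<sigma>)"] that \<alpha>_base
    by (simp add: F_def glue_loop_path_def reversepath_def)
  ultimately have hom: "based_homotopic d0 X (reversepath \<gamma> 0) (\<lambda>t. F (t, 1))
      (path_conj r (reversepath \<gamma>) (\<lambda>u. F (u, 0)))"
    by (intro based_homotopic_path_conj_of_track[OF r d0]) auto
  have "(\<lambda>u. F (u, 0)) = path_conj r \<gamma> \<alpha>"
    by (simp add: F_def path_conj_eq_glue_loop_path fun_eq_iff)
  moreover have "reversepath \<gamma> 0 = \<gamma> 1"
    by (simp add: reversepath_def)
  ultimately have "based_homotopic d0 X (\<gamma> 1) (\<lambda>t. F (t, 1))
      (path_conj r (reversepath \<gamma>) (path_conj r \<gamma> \<alpha>))"
    using hom by simp
  then show ?thesis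
  proof (rule homotopic_with_eq)
    fix t assume "t \<in> topspace (top_of_set ?S)"
    then show "\<alpha> t = F (t, 1)"
      using r_fix[of "(t, 0)"] by (simp add: F_def glue_loop_path_def)
  qed (use d0 in auto)
qed

subsection \<open>The uniform metric\<close>

lemma dist_le_umetric:
  fixes \<alpha> \<beta> :: "'a::euclidean_space \<Rightarrow> 'b::metric_space"
  assumes "continuous_on (sphere 0 1) \<alpha>" "continuous_on (sphere 0 1) \<beta>" "t \<in> sphere 0 1"
  shows "dist (\<alpha> t) (\<beta> t) \<le> umetric \<alpha> \<beta>"
  unfolding umetric_def
  by (intro cSUP_upper assms bounded_imp_bdd_above compact_imp_bounded compact_continuous_image
      continuous_on_dist compact_sphere)

lemma umetric_nonneg:
  fixes \<alpha> \<beta> :: "'a::euclidean_space \<Rightarrow> 'b::metric_space"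
  assumes "continuous_on (sphere 0 1) \<alpha>" "continuous_on (sphere 0 1) \<beta>"
  shows "0 \<le> umetric \<alpha> \<beta>"
proof -
  obtain t :: 'a where "t \<in> sphere 0 1"
    using sphere_eq_empty[of "0::'a" 1] by fastforce
  then show ?thesis
    using dist_le_umetric[OF assms] zero_le_dist order_trans by blast
qed

lemma umetric_path_conj_le:
  fixes \<alpha> \<beta> :: "'a::euclidean_space \<Rightarrow> 'b::metric_space"
  assumes r: "conj_retraction d0 r" and d0: "d0 \<in> sphere 0 1"
    and \<alpha>: "continuous_on (sphere 0 1) \<alpha>" and \<beta>: "continuous_on (sphere 0 1) \<beta>"
  shows "umetric (path_conj r \<gamma> \<alpha>) (path_conj r \<gamma> \<beta>) \<le> umetric \<alpha> \<beta>"
proof -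
  have "dist (path_conj r \<gamma> \<alpha> t) (path_conj r \<gamma> \<beta> t) \<le> umetric \<alpha> \<beta>" if t: "t \<in> sphere 0 1" for t
  proof (cases "r (t, 1)")
    case (Pair u s)
    then have "s = 0 \<Longrightarrow> u \<in> sphere 0 1"
      using conj_retractionD(2)[OF r t, of 1] d0 by auto
    then show ?thesis
      using Pair dist_le_umetric[OF \<alpha> \<beta>] umetric_nonneg[OF \<alpha> \<beta>] by (auto simp: path_conj_def)
  qed
  then show ?thesis
    unfolding umetric_def[of "path_conj r \<gamma> \<alpha>"] by (intro cSUP_least) auto
qed

lemma rho_le_rho_of_nonexpanding:
  assumes "A \<noteq> {}" "B \<noteq> {}" "f ` A \<subseteq> A'" "f ` B \<subseteq> B'"
    and "\<And>\<alpha> \<beta>. \<alpha> \<in> A \<Longrightarrow> \<beta> \<in> B \<Longrightarrow> umetric (f \<alpha>) (f \<beta>) \<le> umetric \<alpha> \<beta>"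
    and "\<And>\<alpha>. \<alpha> \<in> A' \<union> B' \<Longrightarrow> continuous_on (sphere 0 1) \<alpha>"
  shows "rho A' B' \<le> rho A B"
  unfolding rho_def
proof (rule cInf_mono)
  show "{umetric \<alpha> \<beta> |\<alpha> \<beta>. \<alpha> \<in> A \<and> \<beta> \<in> B} \<noteq> {}"
    using assms(1,2) by blast
  show "bdd_below {umetric \<alpha> \<beta> |\<alpha> \<beta>. \<alpha> \<in> A' \<and> \<beta> \<in> B'}"
    using assms(6) by (auto intro!: bdd_belowI[where m = 0] umetric_nonneg)
  fix x assume "x \<in> {umetric \<alpha> \<beta> |\<alpha> \<beta>. \<alpha> \<in> A \<and> \<beta> \<in> B}"
  then show "\<exists>y \<in> {umetric \<alpha> \<beta> |\<alpha> \<beta>. \<alpha> \<in> A' \<and> \<beta> \<in> B'}. y \<le> x"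
    using assms(3-5) by blast
qed

subsection \<open>Homotopy classes\<close>

lemma based_homotopic_imp_nloops:
  assumes "based_homotopic d0 X x \<alpha> \<beta>"
  shows "\<alpha> \<in> nloops d0 X x" "\<beta> \<in> nloops d0 X x"
  using homotopic_with_imp_continuous[OF assms] homotopic_with_imp_subset1[OF assms]
    homotopic_with_imp_subset2[OF assms] homotopic_with_imp_property[OF assms]
  by (auto simp: nloops_def)

lemma continuous_on_nloops: "\<alpha> \<in> nloops d0 X x \<Longrightarrow> continuous_on (sphere 0 1) \<alpha>"
  by (simp add: nloops_def)

lemma nclass_subset_nloops: "nclass d0 X x \<alpha> \<subseteq> nloops d0 X x"
  by (auto simp: nclass_def)

lemma self_in_nclass: "\<alpha> \<in> nloops d0 X x \<Longrightarrow> \<alpha> \<in> nclass d0 X x \<alpha>"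
  by (auto simp: nclass_def nloops_def continuous_map_subtopology_eu)

lemma nclass_eq:
  assumes "based_homotopic d0 X x \<alpha> \<beta>"
  shows "nclass d0 X x \<alpha> = nclass d0 X x \<beta>"
  using assms unfolding nclass_def
  by (blast intro: homotopic_with_trans homotopic_with_symD)

lemma pi_n_eq_nclass:
  assumes "c \<in> pi_n d0 X x" "\<alpha> \<in> c"
  shows "c = nclass d0 X x \<alpha>"
proof -
  obtain \<beta> where c: "c = nclass d0 X x \<beta>"
    using assms(1) by (auto simp: pi_n_def)
  with assms(2) have "based_homotopic d0 X x \<beta> \<alpha>"
    by (simp add: nclass_def)
  then show ?thesis
    by (simp add: c nclass_eq)
qed

lemma pi_n_nonempty: "c \<in> pi_n d0 X x \<Longrightarrow> c \<noteq> {}"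
  by (auto simp: pi_n_def dest: self_in_nclass)

lemma pi_n_subset_nloops: "c \<in> pi_n d0 X x \<Longrightarrow> c \<subseteq> nloops d0 X x"
  by (auto simp: pi_n_def nclass_def)

lemma change_basepoint_subset_nloops: "change_basepoint d0 X r \<gamma> c \<subseteq> nloops d0 X (\<gamma> 0)"
  by (simp add: change_basepoint_def nclass_subset_nloops)

context
  fixes X :: "'b::metric_space set" and \<gamma> :: "real \<Rightarrow> 'b"
    and d0 :: "'a::euclidean_space" and r :: "'a \<times> real \<Rightarrow> 'a \<times> real"
  assumes r: "conj_retraction d0 r" and d0: "d0 \<in> sphere 0 1"
    and \<gamma>: "path \<gamma>" "path_image \<gamma> \<subseteq> X"
begin

lemma change_basepoint_eq_nclass:
  assumes "c \<in> pi_n d0 X (\<gamma> 1)" "\<alpha> \<in> c"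
  shows "change_basepoint d0 X r \<gamma> c = nclass d0 X (\<gamma> 0) (path_conj r \<gamma> \<alpha>)"
proof -
  define \<beta> where "\<beta> = (SOME \<beta>. \<beta> \<in> c)"
  have "\<beta> \<in> c"
    unfolding \<beta>_def using assms(2) by (rule someI[where P = "\<lambda>\<beta>. \<beta> \<in> c"])
  then have "based_homotopic d0 X (\<gamma> 1) \<alpha> \<beta>"
    using pi_n_eq_nclass[OF assms] by (simp add: nclass_def)
  then have "nclass d0 X (\<gamma> 0) (path_conj r \<gamma> \<alpha>) = nclass d0 X (\<gamma> 0) (path_conj r \<gamma> \<beta>)"
    by (intro nclass_eq path_conj_homotopic[OF r d0 \<gamma>])
  then show ?thesis
    by (simp add: change_basepoint_def \<beta>_def)
qed

lemma path_conj_in_change_basepoint: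
  assumes "c \<in> pi_n d0 X (\<gamma> 1)" "\<alpha> \<in> c"
  shows "path_conj r \<gamma> \<alpha> \<in> change_basepoint d0 X r \<gamma> c"
proof -
  have "based_homotopic d0 X (\<gamma> 1) \<alpha> \<alpha>"
    using pi_n_eq_nclass[OF assms] assms(2) by (simp add: nclass_def)
  then have "path_conj r \<gamma> \<alpha> \<in> nloops d0 X (\<gamma> 0)"
    by (rule based_homotopic_imp_nloops(1)[OF path_conj_homotopic[OF r d0 \<gamma>]])
  then show ?thesis
    by (simp add: change_basepoint_eq_nclass[OF assms] self_in_nclass)
qed

lemma path_conj_reversepath_in_pi_n:
  assumes c: "c \<in> pi_n d0 X (\<gamma> 1)" and \<alpha>': "\<alpha>' \<in> change_basepoint d0 X r \<gamma> c"
  shows "path_conj r (reversepath \<gamma>) \<alpha>' \<in> c"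
proof -
  obtain \<alpha> where \<alpha>: "\<alpha> \<in> c"
    using pi_n_nonempty[OF c] by blast
  have ends: "reversepath \<gamma> 0 = \<gamma> 1" "reversepath \<gamma> 1 = \<gamma> 0"
    by (simp_all add: reversepath_def)
  have "based_homotopic d0 X (reversepath \<gamma> 1) (path_conj r \<gamma> \<alpha>) \<alpha>'"
    using \<alpha>' by (simp add: change_basepoint_eq_nclass[OF c \<alpha>] nclass_def ends)
  then have "based_homotopic d0 X (reversepath \<gamma> 0)
      (path_conj r (reversepath \<gamma>) (path_conj r \<gamma> \<alpha>)) (path_conj r (reversepath \<gamma>) \<alpha>')"
    by (intro path_conj_homotopic[OF r d0]) (simp_all add: \<gamma>)
  then have "based_homotopic d0 X (\<gamma> 1)
      (path_conj r (reversepath \<gamma>) (path_conj r \<gamma> \<alpha>)) (path_conj r (reversepath \<gamma>) \<alpha>')"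
    unfolding ends .
  moreover have "based_homotopic d0 X (\<gamma> 1) \<alpha> (path_conj r (reversepath \<gamma>) (path_conj r \<gamma> \<alpha>))"
    using based_homotopic_path_conj_reversepath[OF r d0 \<gamma>] \<alpha> pi_n_subset_nloops[OF c] by blast
  ultimately have "based_homotopic d0 X (\<gamma> 1) \<alpha> (path_conj r (reversepath \<gamma>) \<alpha>')"
    by (rule homotopic_with_trans[rotated])
  then show ?thesis
    using based_homotopic_imp_nloops(2) pi_n_eq_nclass[OF c \<alpha>] by (simp add: nclass_def)
qed

lemma rho_change_basepoint_le:
  assumes a: "a \<in> pi_n d0 X (\<gamma> 1)" and b: "b \<in> pi_n d0 X (\<gamma> 1)"
  shows "rho (change_basepoint d0 X r \<gamma> a) (change_basepoint d0 X r \<gamma> b) \<le> rho a b"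
proof (rule rho_le_rho_of_nonexpanding[where f = "path_conj r \<gamma>"])
  show "a \<noteq> {}" "b \<noteq> {}"
    using a b by (simp_all add: pi_n_nonempty)
  show "path_conj r \<gamma> ` a \<subseteq> change_basepoint d0 X r \<gamma> a"
    "path_conj r \<gamma> ` b \<subseteq> change_basepoint d0 X r \<gamma> b"
    using path_conj_in_change_basepoint a b by blast+
  show "umetric (path_conj r \<gamma> \<alpha>) (path_conj r \<gamma> \<beta>) \<le> umetric \<alpha> \<beta>" if "\<alpha> \<in> a" "\<beta> \<in> b" for \<alpha> \<beta>
    using that pi_n_subset_nloops[OF a] pi_n_subset_nloops[OF b]
    by (intro umetric_path_conj_le[OF r d0] continuous_on_nloops) auto
  show "continuous_on (sphere 0 1) \<alpha>"
    if "\<alpha> \<in> change_basepoint d0 X r \<gamma> a \<union> change_basepoint d0 X r \<gamma> b" for \<alpha>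
    using that change_basepoint_subset_nloops by (blast intro: continuous_on_nloops)
qed

lemma rho_le_rho_change_basepoint:
  assumes a: "a \<in> pi_n d0 X (\<gamma> 1)" and b: "b \<in> pi_n d0 X (\<gamma> 1)"
  shows "rho a b \<le> rho (change_basepoint d0 X r \<gamma> a) (change_basepoint d0 X r \<gamma> b)"
proof (rule rho_le_rho_of_nonexpanding[where f = "path_conj r (reversepath \<gamma>)"])
  show "change_basepoint d0 X r \<gamma> a \<noteq> {}" "change_basepoint d0 X r \<gamma> b \<noteq> {}"
    using a b pi_n_nonempty path_conj_in_change_basepoint by blast+
  show "path_conj r (reversepath \<gamma>) ` change_basepoint d0 X r \<gamma> a \<subseteq> a"
    "path_conj r (reversepath \<gamma>) ` change_basepoint d0 X r \<gamma> b \<subseteq> b"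
    using path_conj_reversepath_in_pi_n a b by blast+
  show "umetric (path_conj r (reversepath \<gamma>) \<alpha>) (path_conj r (reversepath \<gamma>) \<beta>) \<le> umetric \<alpha> \<beta>"
    if "\<alpha> \<in> change_basepoint d0 X r \<gamma> a" "\<beta> \<in> change_basepoint d0 X r \<gamma> b" for \<alpha> \<beta>
    using that change_basepoint_subset_nloops
    by (intro umetric_path_conj_le[OF r d0] continuous_on_nloops) blast+
  show "continuous_on (sphere 0 1) \<alpha>" if "\<alpha> \<in> a \<union> b" for \<alpha>
    using that pi_n_subset_nloops[OF a] pi_n_subset_nloops[OF b] by (blast intro: continuous_on_nloops)
qed

end

theorem proposition4p11:
  fixes X :: "'b::metric_space set" and \<gamma> :: "real \<Rightarrow> 'b"
    and d0 :: "'a::euclidean_space" and r :: "'a \<times> real \<Rightarrow> 'a \<times> real"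
  assumes "DIM('a) \<ge> 2"
    and "d0 \<in> Basis"
    and "path_connected X"
    and "path \<gamma>" and "path_image \<gamma> \<subseteq> X"
    and "conj_retraction d0 r"
    and "a \<in> pi_n d0 X (\<gamma> 1)" and "b \<in> pi_n d0 X (\<gamma> 1)"
  shows "rho (change_basepoint d0 X r \<gamma> a) (change_basepoint d0 X r \<gamma> b) = rho a b"
proof -
  have "d0 \<in> sphere 0 1"
    using assms(2) by simp
  with assms(4-8) show ?thesis
    by (intro order_antisym rho_change_basepoint_le rho_le_rho_change_basepoint)
qed

end
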